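(* Let $X=(V,E,T)$ be an $(s,k,K)$-two layer system and let $C\subseteq\mathbb{F}_p^V$ be a linear code modelled over $X$ (with constraint set $\mathcal{E}$). Assume that $X$ has the $((\delta,\alpha),\varepsilon_0)$-unique neighbor expansion property. Let $\underline{c}\in\mathbb{F}_p^V$ and let $A(\underline{c})=\{\operatorname{supp}(\underline{e}):\underline{e}\in\mathcal{E},\ \underline{e}\cdot\underline{c}\neq0\}$. If there is $0<\varepsilon<\varepsilon_0$ such that $\frac{w(A(\underline{c}))}{w(E)}\le\varepsilon$ and $A(\underline{c})$ is $(\delta,\alpha)$-locally small, then $\underline{c}\in C$.
   Context: Let $s,k,K$ be positive integers. An $(s,k,K)$-two layer system is a triple $X=(V,E,T)$ where: $V$ is a finite set; $E\subseteq 2^V$ with $|\tau|=k$ for all $\tau\in E$ and $\bigcup_{\tau\in E}\tau=V$; $T\subseteq 2^E$ with $|\sigma|=K$ for all $\sigma\in T$ and $\bigcup_{\sigma\in T}\sigma=E$. Write $v\in\sigma$ ($v\in V,\sigma\in T$) if $v\in\tau$ for some $\tau\in\sigma$; it is required that $2\le|\{\tau\in\sigma:v\in\tau\}|\le s$ for all $\sigma\in T$, $v\in\sigma$. A positive $w:T\to\mathbb{R}_{>0}$ is fixed and extended by $w(\tau)=\sum_{\sigma\ni\tau}w(\sigma)$ ($\tau\in E$), $w(v)=\sum_{\sigma\in T,v\in\sigma}w(\sigma)$, $w(B)=\sum_{\eta\in B}w(\eta)$. For $v\in V$, $E_v=\{\tau\in E:v\in\tau\}$; the link of $v$ is the graph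 on $E_v$ where distinct $\tau_1,\tau_2$ are adjacent iff some $\sigma\in T$ contains both, with weight $m_v(\{\tau_1,\tau_2\})=\sum_{\sigma\in T,\tau_1,\tau_2\in\sigma}w(\sigma)$; $m_v(\tau)$ is the sum of weights of link edges at $\tau$, and $m_v(B)=\sum_{\tau\in B}m_v(\tau)$. For $A\subseteq E$, $A_v=A\cap E_v$. A vertex $v$ is $\mu$-small with respect to $A$ if $m_v(A_v)/m_v(E_v)<\mu$, and $\mu$-large otherwise. A set $A\subseteq E$ is $(\delta,\alpha)$-locally small if $\sum_{v\ \delta\text{-large}}m_v(A_v)\le\alpha\,w(A)$. For constants $0<\delta<1$, $0\le\alpha<1$, $0<\varepsilon_0<1$, $X$ has the $((\delta,\alpha),\varepsilon_0)$-unique neighbor expansion property if every non-empty $A\subseteq E$ with $w(A)/w(E)<\varepsilon_0$ that is $(\delta,\alpha)$-locally small admits $\sigma\in T$ with $|A\cap\sigma|=1$. Codes: $p$ is a prime power and $\mathbb{F}_p$ the field with $p$ elements. For $\underline{e},\underline{c}\in\mathbb{F}_p^V$, $\underline{e}\cdot\underline{c}=\sum_v\underline{e}(v)\underline{c}(v)$ and $\operatorname{supp}(\underline{e})=\{v:\underline{e}(v)\ne0\}$. A linear code $C\subseteq\mathbb{F}_p^V$ is modelled over $X$ if there is a set $\mathcal{E}\subseteq\mathbb{F}_p^V$ (the rows of a check matrix) with $C=\{\underline{c}:\underline{e}\cdot\underline{c}=0\ \forall\underline{e}\in\mathcal{E}\}$, such that $\underline{e}\mapsto\operatorname{supp}(\underline{e})$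 is a bijection $\mathcal{E}\to E$, and there is a set $\mathcal{T}$ of linear dependencies (functions $\operatorname{ld}:\mathcal{E}\to\mathbb{F}_p$ with $\sum_{\underline{e}}\operatorname{ld}(\underline{e})(\underline{e}\cdot\underline{c})=0$ for all $\underline{c}\in\mathbb{F}_p^V$) such that $T=\{\{\operatorname{supp}(\underline{e}):\operatorname{ld}(\underline{e})\neq0\}:\operatorname{ld}\in\mathcal{T}\}$. *)

theory Defs
  imports Complex_Main
begin

(* Vertices have type 'v; edges (elements of E) are vertex sets; faces (elements of T)
   are sets of edges.  The weight w is given on T. *)

definition two_layer_system ::
  "nat \<Rightarrow> nat \<Rightarrow> nat \<Rightarrow> 'v set \<Rightarrow> 'v set set \<Rightarrow> 'v set set set \<Rightarrow> bool" where
  "two_layer_system s k K V E T \<longleftrightarrow>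
     0 < s \<and> 0 < k \<and> 0 < K \<and> finite V \<and>
     E \<subseteq> Pow V \<and> (\<forall>\<tau>\<in>E. card \<tau> = k) \<and> \<Union>E = V \<and>
     T \<subseteq> Pow E \<and> (\<forall>\<sigma>\<in>T. card \<sigma> = K) \<and> \<Union>T = E \<and>
     (\<forall>\<sigma>\<in>T. \<forall>v\<in>\<Union>\<sigma>. 2 \<le> card {\<tau>\<in>\<sigma>. v \<in> \<tau>} \<and> card {\<tau>\<in>\<sigma>. v \<in> \<tau>} \<le> s)"

(* v \<in> \<sigma> in the paper's sense is v \<in> \<Union>\<sigma> *)

definition weight_pos :: "'v set set set \<Rightarrow> ('v set set \<Rightarrow> real) \<Rightarrow> bool" where
  "weight_pos T w \<longleftrightarrow> (\<forall>\<sigma>\<in>T. 0 < w \<sigma>)"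

definition wE :: "'v set set set \<Rightarrow> ('v set set \<Rightarrow> real) \<Rightarrow> 'v set \<Rightarrow> real" where
  "wE T w \<tau> = (\<Sum>\<sigma>\<in>{\<sigma>\<in>T. \<tau> \<in> \<sigma>}. w \<sigma>)"

definition wEset :: "'v set set set \<Rightarrow> ('v set set \<Rightarrow> real) \<Rightarrow> 'v set set \<Rightarrow> real" where
  "wEset T w B = (\<Sum>\<tau>\<in>B. wE T w \<tau>)"

definition Ev :: "'v set set \<Rightarrow> 'v \<Rightarrow> 'v set set" where
  "Ev E v = {\<tau>\<in>E. v \<in> \<tau>}"

(* weight of the link edge {\<tau>1, \<tau>2} (0 if not adjacent) *)
definition m_edge :: "'v set set set \<Rightarrow> ('v set set \<Rightarrow> real) \<Rightarrow> 'v set \<Rightarrow> 'v set \<Rightarrow> real" where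
  "m_edge T w \<tau>1 \<tau>2 = (\<Sum>\<sigma>\<in>{\<sigma>\<in>T. \<tau>1 \<in> \<sigma> \<and> \<tau>2 \<in> \<sigma>}. w \<sigma>)"

definition m_vert :: "'v set set \<Rightarrow> 'v set set set \<Rightarrow> ('v set set \<Rightarrow> real) \<Rightarrow> 'v \<Rightarrow> 'v set \<Rightarrow> real" where
  "m_vert E T w v \<tau> =
     (\<Sum>\<tau>'\<in>{\<tau>'\<in>Ev E v. \<tau>' \<noteq> \<tau> \<and> (\<exists>\<sigma>\<in>T. \<tau> \<in> \<sigma> \<and> \<tau>' \<in> \<sigma>)}. m_edge T w \<tau> \<tau>')"

definition m_set :: "'v set set \<Rightarrow> 'v set set set \<Rightarrow> ('v set set \<Rightarrow> real) \<Rightarrow> 'v \<Rightarrow> 'v set set \<Rightarrow> real" where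
  "m_set E T w v B = (\<Sum>\<tau>\<in>B. m_vert E T w v \<tau>)"

definition mu_large ::
  "'v set set \<Rightarrow> 'v set set set \<Rightarrow> ('v set set \<Rightarrow> real) \<Rightarrow> real \<Rightarrow> 'v set set \<Rightarrow> 'v \<Rightarrow> bool" where
  "mu_large E T w \<mu> A v \<longleftrightarrow>
     \<not> (m_set E T w v (A \<inter> Ev E v) / m_set E T w v (Ev E v) < \<mu>)"

definition locally_small ::
  "'v set \<Rightarrow> 'v set set \<Rightarrow> 'v set set set \<Rightarrow> ('v set set \<Rightarrow> real) \<Rightarrow> real \<Rightarrow> real \<Rightarrow> 'v set set \<Rightarrow> bool" where
  "locally_small V E T w \<delta> \<alpha> A \<longleftrightarrow>
     (\<Sum>v\<in>{v\<in>V. mu_large E T w \<delta> A v}. m_set E T w v (A \<inter> Ev E v)) \<le> \<alpha> * wEset T w A"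

definition unique_neighbor_expansion ::
  "'v set \<Rightarrow> 'v set set \<Rightarrow> 'v set set set \<Rightarrow> ('v set set \<Rightarrow> real) \<Rightarrow> real \<Rightarrow> real \<Rightarrow> real \<Rightarrow> bool" where
  "unique_neighbor_expansion V E T w \<delta> \<alpha> \<epsilon>0 \<longleftrightarrow>
     (\<forall>A. A \<subseteq> E \<longrightarrow> A \<noteq> {} \<longrightarrow> wEset T w A / wEset T w E < \<epsilon>0 \<longrightarrow>
          locally_small V E T w \<delta> \<alpha> A \<longrightarrow> (\<exists>\<sigma>\<in>T. card (A \<inter> \<sigma>) = 1))"

(* Codes over a finite field 'f; vectors in F^V are functions vanishing outside V *)
definition vecs :: "'v set \<Rightarrow> ('v \<Rightarrow> 'f::field) set" where
  "vecs V = {c. \<forall>v. v \<notin> V \<longrightarrow> c v = 0}"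

definition dotp :: "'v set \<Rightarrow> ('v \<Rightarrow> 'f::field) \<Rightarrow> ('v \<Rightarrow> 'f) \<Rightarrow> 'f" where
  "dotp V e c = (\<Sum>v\<in>V. e v * c v)"

definition supp :: "'v set \<Rightarrow> ('v \<Rightarrow> 'f::field) \<Rightarrow> 'v set" where
  "supp V e = {v\<in>V. e v \<noteq> 0}"

definition code_of :: "'v set \<Rightarrow> ('v \<Rightarrow> 'f::field) set \<Rightarrow> ('v \<Rightarrow> 'f) set" where
  "code_of V \<E> = {c\<in>vecs V. \<forall>e\<in>\<E>. dotp V e c = 0}"

definition is_lin_dep :: "'v set \<Rightarrow> ('v \<Rightarrow> 'f::field) set \<Rightarrow> (('v \<Rightarrow> 'f) \<Rightarrow> 'f) \<Rightarrow> bool" where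
  "is_lin_dep V \<E> ld \<longleftrightarrow> (\<forall>c\<in>vecs V. (\<Sum>e\<in>\<E>. ld e * dotp V e c) = 0)"

definition modelled_over ::
  "'v set \<Rightarrow> 'v set set \<Rightarrow> 'v set set set \<Rightarrow> ('v \<Rightarrow> 'f::field) set \<Rightarrow> ('v \<Rightarrow> 'f) set \<Rightarrow> bool" where
  "modelled_over V E T C \<E> \<longleftrightarrow>
     \<E> \<subseteq> vecs V \<and> C = code_of V \<E> \<and> bij_betw (supp V) \<E> E \<and>
     (\<exists>\<T>. (\<forall>ld\<in>\<T>. is_lin_dep V \<E> ld) \<and>
          T = (\<lambda>ld. {supp V e | e. e \<in> \<E> \<and> ld e \<noteq> 0}) ` \<T>)"

definition A_of :: "'v set \<Rightarrow> ('v \<Rightarrow> 'f::field) set \<Rightarrow> ('v \<Rightarrow> 'f) \<Rightarrow> 'v set set" where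
  "A_of V \<E> c = {supp V e | e. e \<in> \<E> \<and> dotp V e c \<noteq> 0}"

end

theory Submission
  imports Defs
begin

text \<open>If \<open>c\<close> violated some check but the unique neighbor expansion property applied to
  \<open>A(c)\<close>, it would produce a face \<open>\<sigma>\<close> containing exactly one violated check. Since \<open>\<sigma>\<close> is
  the support of a linear dependency \<open>ld\<close>, the identity \<open>\<Sum>e. ld e * (e \<cdot> c) = 0\<close> then
  reduces to a single non-zero term, which is impossible.\<close>

lemma A_of_empty_iff_in_code_of:
  assumes "c \<in> vecs V"
  shows "A_of V \<E> c = {} \<longleftrightarrow> c \<in> code_of V \<E>"
  using assms unfolding A_of_def code_of_def by blast

lemma A_of_subset:
  assumes "bij_betw (supp V) \<E> E"
  shows "A_of V \<E> c \<subseteq> E"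
  using assms bij_betw_imp_surj_on unfolding A_of_def by blast

lemma lin_dep_face_not_unique_neighbor:
  assumes "finite \<E>" and "inj_on (supp V) \<E>"
    and "is_lin_dep V \<E> ld" and "c \<in> vecs V"
  shows "card (A_of V \<E> c \<inter> {supp V e | e. e \<in> \<E> \<and> ld e \<noteq> 0}) \<noteq> 1"
proof
  assume "card (A_of V \<E> c \<inter> {supp V e | e. e \<in> \<E> \<and> ld e \<noteq> 0}) = 1"
  then obtain \<tau> where \<tau>: "A_of V \<E> c \<inter> {supp V e | e. e \<in> \<E> \<and> ld e \<noteq> 0} = {\<tau>}"
    by (rule card_1_singletonE)
  then have "\<tau> \<in> A_of V \<E> c \<inter> {supp V e | e. e \<in> \<E> \<and> ld e \<noteq> 0}"
    by simp
  then obtain e0 e1 where e0: "e0 \<in> \<E>" "supp V e0 = \<tau>" "dotp V e0 c \<noteq> 0"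
    and e1: "e1 \<in> \<E>" "supp V e1 = \<tau>" "ld e1 \<noteq> 0"
    unfolding A_of_def by auto
  have "e1 = e0"
    using e0 e1 inj_onD[OF assms(2)] by metis
  have others_zero: "ld e * dotp V e c = 0" if "e \<in> \<E> - {e0}" for e
  proof (rule ccontr)
    assume "ld e * dotp V e c \<noteq> 0"
    then have "supp V e \<in> A_of V \<E> c \<inter> {supp V e | e. e \<in> \<E> \<and> ld e \<noteq> 0}"
      using that unfolding A_of_def by auto
    with \<tau> e0 have "supp V e = supp V e0" by blast
    with that e0 inj_onD[OF assms(2)] show False by blast
  qed
  have "(\<Sum>e\<in>\<E>. ld e * dotp V e c) = (\<Sum>e\<in>{e0}. ld e * dotp V e c)"
    using assms(1) e0(1) others_zero by (intro sum.mono_neutral_right) auto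
  also have "\<dots> = ld e0 * dotp V e0 c"
    by simp
  also have "\<dots> \<noteq> 0"
    using e0 e1 \<open>e1 = e0\<close> by simp
  finally show False
    using assms(3,4) unfolding is_lin_dep_def by blast
qed

theorem lemma3p4:
  fixes s k K :: nat and V :: "'v set" and E :: "'v set set" and T :: "'v set set set"
    and w :: "'v set set \<Rightarrow> real" and \<delta> \<alpha> \<epsilon>0 \<epsilon> :: real
    and C \<E> :: "('v \<Rightarrow> 'f::{field,finite}) set" and c :: "'v \<Rightarrow> 'f"
  assumes "two_layer_system s k K V E T"
    and "weight_pos T w"
    and "modelled_over V E T C \<E>"
    and "0 < \<delta>" "\<delta> < 1" "0 \<le> \<alpha>" "\<alpha> < 1" "0 < \<epsilon>0" "\<epsilon>0 < 1"
    and "unique_neighbor_expansion V E T w \<delta> \<alpha> \<epsilon>0"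
    and "c \<in> vecs V"
    and "0 < \<epsilon>" "\<epsilon> < \<epsilon>0"
    and "wEset T w (A_of V \<E> c) / wEset T w E \<le> \<epsilon>"
    and "locally_small V E T w \<delta> \<alpha> (A_of V \<E> c)"
  shows "c \<in> C"
proof (rule ccontr)
  assume "c \<notin> C"
  from assms(3) obtain \<T> where C: "C = code_of V \<E>" and bij: "bij_betw (supp V) \<E> E"
    and lin_dep: "\<forall>ld\<in>\<T>. is_lin_dep V \<E> ld"
    and T: "T = (\<lambda>ld. {supp V e | e. e \<in> \<E> \<and> ld e \<noteq> 0}) ` \<T>"
    unfolding modelled_over_def by blast
  have "finite E"
    using assms(1) unfolding two_layer_system_def by (meson finite_Pow_iff rev_finite_subset)
  with bij have "finite \<E>" by (rule bij_betw_finite[THEN iffD2])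
  have "A_of V \<E> c \<noteq> {}"
    using \<open>c \<notin> C\<close> C A_of_empty_iff_in_code_of[OF assms(11)] by blast
  moreover have "wEset T w (A_of V \<E> c) / wEset T w E < \<epsilon>0"
    using assms(13,14) by linarith
  ultimately obtain \<sigma> where "\<sigma> \<in> T" and unique: "card (A_of V \<E> c \<inter> \<sigma>) = 1"
    using assms(10,15) A_of_subset[OF bij] unfolding unique_neighbor_expansion_def by blast
  then obtain ld where "ld \<in> \<T>" and "\<sigma> = {supp V e | e. e \<in> \<E> \<and> ld e \<noteq> 0}"
    using T by blast
  with unique lin_dep show False
    using lin_dep_face_not_unique_neighbor[OF \<open>finite \<E>\<close> bij_betw_imp_inj_on[OF bij] _ assms(11)]
    by blast
qed

end
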